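(* Let $l,t$ be integers with $2\leq l\leq t$. If $s$ is sufficiently large (in terms of $l,t$), then for all integers $n\geq 2s+1$ and $x$ with $l\leq x\leq s$, $$ex(n,\{K_{l,t},M_{s+1}\},x)\leq (l-1)n+(t-1)\binom{s}{l}-\left\lceil\frac{s(l-1)}{2}\right\rceil.$$
   Context: All graphs are finite and simple. $K_{l,t}$ is the complete bipartite graph with parts of sizes $l,t$; $M_{s+1}$ is the matching of $s+1$ disjoint edges. For a graph $G$ with matching number at most $s$, say $X\subseteq V(G)$ is admissible if $|X|+\sum_{i=1}^m\lfloor |V(C_i)|/2\rfloor\leq s$, where $C_1,\dots,C_m$ are the components of $G-X$; let $x(G)$ be the maximum size of an admissible set. Let $\mathscr{G}_x$ be the set of graphs on $n$ vertices containing neither $K_{l,t}$ nor $M_{s+1}$ as a subgraph and with $x(G)=x$, and $ex(n,\{K_{l,t},M_{s+1}\},x)=\max_{G\in\mathscr{G}_x}e(G)$. *)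

theory Defs
  imports Complex_Main
begin

definition is_graph :: "nat \<Rightarrow> nat set set \<Rightarrow> bool" where
  "is_graph n E \<longleftrightarrow> (\<forall>e\<in>E. \<exists>u v. e = {u, v} \<and> u \<noteq> v \<and> u < n \<and> v < n)"

definition contains_Klt :: "nat \<Rightarrow> nat set set \<Rightarrow> nat \<Rightarrow> nat \<Rightarrow> bool" where
  "contains_Klt n E l t \<longleftrightarrow> (\<exists>A B. A \<subseteq> {0..<n} \<and> B \<subseteq> {0..<n} \<and> A \<inter> B = {} \<and>
      card A = l \<and> card B = t \<and> (\<forall>a\<in>A. \<forall>b\<in>B. {a, b} \<in> E))"

definition contains_matching :: "nat set set \<Rightarrow> nat \<Rightarrow> bool" where
  "contains_matching E k \<longleftrightarrow> (\<exists>M. M \<subseteq> E \<and> card M = k \<and>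
      (\<forall>e\<in>M. \<forall>f\<in>M. e \<noteq> f \<longrightarrow> e \<inter> f = {}))"

definition adj_rel :: "nat set set \<Rightarrow> nat set \<Rightarrow> (nat \<times> nat) set" where
  "adj_rel E W = {(u, v). u \<in> W \<and> v \<in> W \<and> {u, v} \<in> E}"

definition components :: "nat \<Rightarrow> nat set set \<Rightarrow> nat set \<Rightarrow> nat set set" where
  "components n E X = (\<lambda>v. {u \<in> {0..<n} - X. (v, u) \<in> (adj_rel E ({0..<n} - X))\<^sup>*}) ` ({0..<n} - X)"

definition admissible :: "nat \<Rightarrow> nat set set \<Rightarrow> nat \<Rightarrow> nat set \<Rightarrow> bool" where
  "admissible n E s X \<longleftrightarrow> X \<subseteq> {0..<n} \<and>
      card X + (\<Sum>C\<in>components n E X. card C div 2) \<le> s"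

definition xG :: "nat \<Rightarrow> nat set set \<Rightarrow> nat \<Rightarrow> nat" where
  "xG n E s = Max {card X | X. admissible n E s X}"

definition Gfam :: "nat \<Rightarrow> nat \<Rightarrow> nat \<Rightarrow> nat \<Rightarrow> nat \<Rightarrow> nat set set set" where
  "Gfam n l t s x = {E. is_graph n E \<and> \<not> contains_Klt n E l t \<and>
      \<not> contains_matching E (s + 1) \<and> xG n E s = x}"

text \<open>ex(n,{K_{l,t},M_{s+1}},x) = max e(G) over \<G>_x (Sup of a finite set of naturals;
  0 if the family is empty).\<close>
definition ex_x :: "nat \<Rightarrow> nat \<Rightarrow> nat \<Rightarrow> nat \<Rightarrow> nat \<Rightarrow> nat" where
  "ex_x n l t s x = Sup (card ` Gfam n l t s x)"

end

theory Submission
  imports Defs "HOL-Analysis.Convex"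
begin

(* Take an admissible set X of maximum size x; admissible sets exist by the easy half of the
   Tutte-Berge formula. Writing d_S(w) for the number of neighbours of w in S, the edges of G
   are counted as

     2 e(G) = sum_{w in X} d_X(w) + 2 sum_{w notin X} d_X(w) + sum_C 2 e(C),

   C ranging over the components of G - X. Since d <= (l - 1) + (d choose l) and a K_{l,t}-free
   graph has sum_w (d_X(w) choose l) <= (t - 1) (x choose l), the first two terms are at most
   (l - 1)(2n - x) + 2(t - 1)(x choose l). Admissibility gives sum_C floor(|C|/2) <= k = s - x,
   and 2(t - 1)((s choose l) - (x choose l)) - (l - 1) k grows like k^(l - 1): for l >= 3 it
   dominates the trivial bound 4k^2 + 2k on sum_C 2 e(C), while for l = 2 each component is
   bounded by the Kovari-Sos-Turan argument, 2 e(C) <= floor(|C|/2) s once s >= 27(t - 1) + 4.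
   Altogether 2 e(G) + (l - 1) s <= 2 (l - 1) n + 2 (t - 1) (s choose l). *)


section \<open>Components of induced subgraphs\<close>

definition component_of :: "nat set set \<Rightarrow> nat set \<Rightarrow> nat \<Rightarrow> nat set" where
  "component_of E W v = {u \<in> W. (v, u) \<in> (adj_rel E W)\<^sup>*}"

definition components_on :: "nat set set \<Rightarrow> nat set \<Rightarrow> nat set set" where
  "components_on E W = component_of E W ` W"

lemma components_eq_components_on: "components n E X = components_on E ({0..<n} - X)"
  by (simp add: components_def components_on_def component_of_def)

lemma adj_rel_sym: "(u, v) \<in> adj_rel E W \<Longrightarrow> (v, u) \<in> adj_rel E W"
  by (auto simp: adj_rel_def insert_commute)

lemma adj_rel_rtrancl_sym: "(u, v) \<in> (adj_rel E W)\<^sup>* \<Longrightarrow> (v, u) \<in> (adj_rel E W)\<^sup>*"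
proof -
  have "(adj_rel E W)\<inverse> = adj_rel E W"
    using adj_rel_sym by auto
  then show "(u, v) \<in> (adj_rel E W)\<^sup>* \<Longrightarrow> (v, u) \<in> (adj_rel E W)\<^sup>*"
    by (metis rtrancl_converseI)
qed

lemma mem_component_of_self: "v \<in> W \<Longrightarrow> v \<in> component_of E W v"
  by (simp add: component_of_def)

lemma component_of_subset: "component_of E W v \<subseteq> W"
  by (auto simp: component_of_def)

lemma component_of_eq: "u \<in> component_of E W v \<Longrightarrow> component_of E W u = component_of E W v"
  unfolding component_of_def by (auto intro: rtrancl_trans dest: adj_rel_rtrancl_sym)

lemma component_of_connected:
  "u \<in> component_of E W v \<Longrightarrow> w \<in> component_of E W v \<Longrightarrow> (u, w) \<in> (adj_rel E W)\<^sup>*"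
  unfolding component_of_def by (auto intro: rtrancl_trans dest: adj_rel_rtrancl_sym)

lemma component_of_edge:
  "u \<in> component_of E W v \<Longrightarrow> {u, w} \<in> E \<Longrightarrow> w \<in> W \<Longrightarrow> w \<in> component_of E W v"
  unfolding component_of_def adj_rel_def by (auto intro: rtrancl_into_rtrancl)

lemma components_on_subset: "C \<in> components_on E W \<Longrightarrow> C \<subseteq> W"
  unfolding components_on_def using component_of_subset by blast

lemma finite_components_on: "finite W \<Longrightarrow> finite (components_on E W)"
  unfolding components_on_def by simp

lemma Union_components_on: "\<Union>(components_on E W) = W"
  unfolding components_on_def using mem_component_of_self component_of_subset by blast

lemma components_on_disjoint:
  assumes "C \<in> components_on E W" "C' \<in> components_on E W" "C \<noteq> C'"
  shows "C \<inter> C' = {}"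
proof (rule ccontr)
  assume "C \<inter> C' \<noteq> {}"
  then obtain u where "u \<in> C" "u \<in> C'"
    by blast
  moreover obtain v v' where "C = component_of E W v" "C' = component_of E W v'"
    using assms(1,2) unfolding components_on_def by blast
  ultimately show False
    using assms(3) component_of_eq by metis
qed

lemma components_on_edge:
  "C \<in> components_on E W \<Longrightarrow> u \<in> C \<Longrightarrow> {u, w} \<in> E \<Longrightarrow> w \<in> W \<Longrightarrow> w \<in> C"
  unfolding components_on_def using component_of_edge by blast

lemma components_on_connected:
  "C \<in> components_on E W \<Longrightarrow> u \<in> C \<Longrightarrow> w \<in> C \<Longrightarrow> (u, w) \<in> (adj_rel E W)\<^sup>*"
  unfolding components_on_def using component_of_connected by blast

lemma component_of_insert_edge_away:
  assumes "v \<in> W" "v \<notin> component_of F W x" "v \<notin> component_of F W y"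
  shows "component_of (insert {x, y} F) W v = component_of F W v"
proof
  have "adj_rel F W \<subseteq> adj_rel (insert {x, y} F) W"
    unfolding adj_rel_def by auto
  then show "component_of F W v \<subseteq> component_of (insert {x, y} F) W v"
    unfolding component_of_def using rtrancl_mono by blast
next
  let ?R = "adj_rel F W"
  have not_to_ends: "(v, x) \<notin> ?R\<^sup>*" "(v, y) \<notin> ?R\<^sup>*"
    using assms by (auto simp: component_of_def dest: adj_rel_rtrancl_sym)
  have "(v, u) \<in> ?R\<^sup>* \<or> (v, x) \<in> ?R\<^sup>* \<or> (v, y) \<in> ?R\<^sup>*"
    if "(v, u) \<in> (adj_rel (insert {x, y} F) W)\<^sup>*" for u
    using that
  proof (induction rule: rtrancl_induct)
    case (step z u)
    then show ?case
      by (auto simp: adj_rel_def doubleton_eq_iff intro: rtrancl_into_rtrancl)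
  qed simp
  then show "component_of (insert {x, y} F) W v \<subseteq> component_of F W v"
    using not_to_ends by (auto simp: component_of_def)
qed

lemma component_of_restrict:
  assumes K: "K = component_of D W a" and v: "v \<in> K"
  shows "component_of {e\<in>D. e \<subseteq> K} K v = K"
proof
  show "component_of {e\<in>D. e \<subseteq> K} K v \<subseteq> K"
    by (rule component_of_subset)
next
  let ?R = "adj_rel {e\<in>D. e \<subseteq> K} K"
  have path: "u \<in> K \<and> (v, u) \<in> ?R\<^sup>*" if "(v, u) \<in> (adj_rel D W)\<^sup>*" for u
    using that
  proof (induction rule: rtrancl_induct)
    case base
    then show ?case
      using v by simp
  next
    case (step z u)
    have z: "z \<in> K" and vz: "(v, z) \<in> ?R\<^sup>*"
      using step.IH by auto
    have zu: "{z, u} \<in> D" "u \<in> W"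
      using step.hyps(2) by (auto simp: adj_rel_def)
    have "u \<in> K"
      using component_of_edge[OF z[unfolded K] zu] K by simp
    then have "(z, u) \<in> ?R"
      using z zu(1) by (simp add: adj_rel_def)
    then show ?case
      using vz \<open>u \<in> K\<close> by simp
  qed
  show "K \<subseteq> component_of {e\<in>D. e \<subseteq> K} K v"
  proof
    fix u
    assume "u \<in> K"
    then have "(v, u) \<in> (adj_rel D W)\<^sup>*"
      using v unfolding K by (rule component_of_connected[rotated])
    then show "u \<in> component_of {e\<in>D. e \<subseteq> K} K v"
      using path \<open>u \<in> K\<close> unfolding component_of_def by blast
  qed
qed

lemma card_components_on_insert_edge:
  assumes "finite W" "x \<in> W" "y \<in> W"
  shows "card (components_on F W) \<le> card (components_on (insert {x, y} F) W) + 1"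
proof -
  let ?c = "component_of F W" and ?c' = "component_of (insert {x, y} F) W"
  define B where "B = ?c ` (W - (?c x \<union> ?c y))"
  have "components_on F W \<subseteq> insert (?c x) (insert (?c y) B)"
    unfolding components_on_def B_def using component_of_eq by blast
  moreover have "finite B"
    unfolding B_def using assms(1) by simp
  ultimately have "card (components_on F W) \<le> card (insert (?c x) (insert (?c y) B))"
    by (intro card_mono) auto
  also have "\<dots> \<le> card B + 2"
    using \<open>finite B\<close> by (simp add: card_insert_if)
  finally have old: "card (components_on F W) \<le> card B + 2" .
  have B_new: "B \<subseteq> components_on (insert {x, y} F) W"
  proof
    fix C
    assume "C \<in> B"
    then obtain v where "v \<in> W" "v \<notin> ?c x" "v \<notin> ?c y" "C = ?c v"
      unfolding B_def by blast
    then show "C \<in> components_on (insert {x, y} F) W"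
      unfolding components_on_def using component_of_insert_edge_away by (metis image_eqI)
  qed
  have "?c' x \<notin> B"
  proof
    assume "?c' x \<in> B"
    then obtain v where v: "v \<in> W" "v \<notin> ?c x" "v \<notin> ?c y" "?c' x = ?c v"
      unfolding B_def using component_of_insert_edge_away by auto
    have "x \<in> ?c v"
      using v(4) mem_component_of_self[OF assms(2)] by metis
    then show False
      using v component_of_eq mem_component_of_self by metis
  qed
  moreover have "?c' x \<in> components_on (insert {x, y} F) W"
    unfolding components_on_def using assms(2) by blast
  ultimately have "card B + 1 \<le> card (components_on (insert {x, y} F) W)"
    using B_new \<open>finite B\<close> finite_components_on[OF assms(1)]
    by (metis Suc_eq_plus1 card_insert_disjoint card_mono insert_subset)
  then show ?thesis
    using old by linarith
qed

lemma card_le_card_edges_add_card_components: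
  assumes "finite W" "finite F" "\<forall>e\<in>F. \<exists>x y. e = {x, y} \<and> x \<in> W \<and> y \<in> W"
  shows "card W \<le> card F + card (components_on F W)"
  using assms(2,3)
proof (induction F rule: finite_induct)
  case empty
  have "components_on {} W = (\<lambda>v. {v}) ` W"
    unfolding components_on_def component_of_def adj_rel_def by auto
  then show ?case
    by (simp add: card_image)
next
  case (insert e F)
  then obtain x y where "e = {x, y}" "x \<in> W" "y \<in> W"
    by blast
  then show ?case
    using insert card_components_on_insert_edge[OF assms(1), of x y F] by simp
qed

lemma sum_card_incident_edges:
  assumes "finite W" "finite F" "\<forall>e\<in>F. card e = 2 \<and> e \<subseteq> W"
  shows "(\<Sum>y\<in>W. card {e\<in>F. y \<in> e}) = 2 * card F"
proof -
  have "(\<Sum>y\<in>W. card {e\<in>F. y \<in> e}) = (\<Sum>y\<in>W. \<Sum>e\<in>F. if y \<in> e then 1 else 0)"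
    using assms(2) by (simp add: sum.If_cases Int_def)
  also have "\<dots> = (\<Sum>e\<in>F. \<Sum>y\<in>W. if y \<in> e then 1 else 0)"
    by (rule sum.swap)
  also have "\<dots> = (\<Sum>e\<in>F. card e)"
    using assms by (intro sum.cong) (auto simp: sum.If_cases Int_absorb1 Int_def[symmetric])
  also have "\<dots> = 2 * card F"
    using assms(3) by simp
  finally show ?thesis .
qed

section \<open>Maximum matchings and the Tutte--Berge barrier\<close>

definition matching_on :: "nat set set \<Rightarrow> nat set \<Rightarrow> nat set set \<Rightarrow> bool" where
  "matching_on E W M \<longleftrightarrow> M \<subseteq> E \<and> (\<forall>e\<in>M. e \<subseteq> W) \<and> pairwise disjnt M"

definition max_matching_on :: "nat set set \<Rightarrow> nat set \<Rightarrow> nat set set \<Rightarrow> bool" where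
  "max_matching_on E W M \<longleftrightarrow>
     matching_on E W M \<and> (\<forall>M'. matching_on E W M' \<longrightarrow> card M' \<le> card M)"

definition switch :: "'a set set \<Rightarrow> 'a set set \<Rightarrow> 'a set \<Rightarrow> 'a set set" where
  "switch A B K = {e\<in>A. \<not> e \<subseteq> K} \<union> {e\<in>B. e \<subseteq> K}"

lemma card_switch:
  assumes "finite A" "finite B"
  shows "card (switch A B K) + card {e\<in>A. e \<subseteq> K} = card A + card {e\<in>B. e \<subseteq> K}"
proof -
  have "card (switch A B K) = card {e\<in>A. \<not> e \<subseteq> K} + card {e\<in>B. e \<subseteq> K}"
    unfolding switch_def using assms by (intro card_Un_disjoint) auto
  moreover have "card A = card ({e\<in>A. \<not> e \<subseteq> K} \<union> {e\<in>A. e \<subseteq> K})"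
    by (rule arg_cong[where f = card]) auto
  moreover have "\<dots> = card {e\<in>A. \<not> e \<subseteq> K} + card {e\<in>A. e \<subseteq> K}"
    using assms(1) by (intro card_Un_disjoint) auto
  ultimately show ?thesis
    by simp
qed

lemma pairwise_disjnt_Un:
  assumes "pairwise disjnt P" "pairwise disjnt Q" "\<And>e f. e \<in> P \<Longrightarrow> f \<in> Q \<Longrightarrow> disjnt e f"
  shows "pairwise disjnt (P \<union> Q)"
  using assms unfolding pairwise_def by (metis Un_iff disjnt_sym)

lemma matching_on_subset: "matching_on E W M \<Longrightarrow> M' \<subseteq> M \<Longrightarrow> matching_on E W M'"
  unfolding matching_on_def by (auto intro: pairwise_subset)

lemma sum_add_card_eq_1_le:
  fixes f :: "'a \<Rightarrow> nat"
  assumes "finite K" "\<And>y. y \<in> K \<Longrightarrow> f y \<le> 2"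
  shows "(\<Sum>y\<in>K. f y) + card {y\<in>K. f y = 1} \<le> 2 * card K"
proof -
  have "(\<Sum>y\<in>K. f y + (if f y = 1 then 1 else 0)) \<le> (\<Sum>y\<in>K. 2)"
    using assms(2) by (intro sum_mono) fastforce
  then show ?thesis
    using assms(1) by (simp add: sum.distrib sum.If_cases Int_def)
qed

text \<open>The edges of \<open>E\<close> need not lie in \<open>W\<close>: matchings and components are taken in the
  subgraph induced on \<open>W\<close>.\<close>

locale finite_graph =
  fixes E :: "nat set set" and W :: "nat set"
  assumes finite_vertices: "finite W" and card_edge: "e \<in> E \<Longrightarrow> card e = 2"
begin

abbreviation matching :: "nat set set \<Rightarrow> bool" where
  "matching \<equiv> matching_on E W"

abbreviation max_matching :: "nat set set \<Rightarrow> bool" where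
  "max_matching \<equiv> max_matching_on E W"

lemma finite_matching: "matching M \<Longrightarrow> finite M"
proof -
  assume "matching M"
  then have "M \<subseteq> Pow W"
    unfolding matching_on_def by auto
  then show "finite M"
    by (rule finite_subset) (simp add: finite_vertices)
qed

lemma ex_max_matching: "\<exists>M. max_matching M"
proof -
  have "card M < Suc (card (Pow W))" if "matching M" for M
  proof -
    have "M \<subseteq> Pow W"
      using that unfolding matching_on_def by auto
    then show ?thesis
      using finite_vertices by (simp add: card_mono le_imp_less_Suc)
  qed
  moreover have "matching {}"
    by (simp add: matching_on_def)
  ultimately show ?thesis
    unfolding max_matching_on_def using ex_has_greatest_nat[of matching "{}" card] by blast
qed

lemma matching_unique_edge: "matching M \<Longrightarrow> e \<in> M \<Longrightarrow> f \<in> M \<Longrightarrow> y \<in> e \<Longrightarrow> y \<in> f \<Longrightarrow> e = f"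
  unfolding matching_on_def pairwise_def disjnt_def by blast

lemma card_Union_matching:
  assumes "matching M"
  shows "card (\<Union>M) = 2 * card M"
proof -
  have "pairwise disjnt M" "\<And>e. e \<in> M \<Longrightarrow> e \<subseteq> W"
    using assms unfolding matching_on_def by auto
  then have "card (\<Union>M) = (\<Sum>e\<in>M. card e)"
    using finite_subset[OF _ finite_vertices] by (blast intro: card_Union_disjoint)
  also have "\<dots> = (\<Sum>e\<in>M. 2)"
    using assms card_edge unfolding matching_on_def by (intro sum.cong) auto
  finally show ?thesis
    by simp
qed

lemma max_matching_covers_edge:
  assumes M: "max_matching M" and pq: "(p, q) \<in> adj_rel E W"
  shows "p \<in> \<Union>M \<or> q \<in> \<Union>M"
proof (rule ccontr)
  assume uncovered: "\<not> (p \<in> \<Union>M \<or> q \<in> \<Union>M)"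
  have "matching (insert {p, q} M)"
    using M pq uncovered
    unfolding max_matching_on_def matching_on_def adj_rel_def pairwise_insert disjnt_def by auto
  then have "card (insert {p, q} M) \<le> card M"
    using M unfolding max_matching_on_def by blast
  moreover have "{p, q} \<notin> M"
    using uncovered by auto
  ultimately show False
    using M finite_matching unfolding max_matching_on_def by simp
qed

lemma adj_rel_irrefl: "(u, v) \<in> adj_rel E W \<Longrightarrow> u \<noteq> v"
  using card_edge[of "{u}"] by (auto simp: adj_rel_def)

lemma edge_subset_component_of:
  assumes "D \<subseteq> E" "f \<in> D" "f \<subseteq> W" "y \<in> f" "y \<in> component_of D W a"
  shows "f \<subseteq> component_of D W a"
proof -
  have "card f = 2"
    using card_edge assms(1,2) by blast
  then obtain u v where "f = {u, v}"
    by (meson card_2_iff)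
  then have f: "f = {y, if y = u then v else u}"
    using assms(4) by auto
  then have "(if y = u then v else u) \<in> component_of D W a"
    using component_of_edge[OF assms(5)] assms(2,3) by auto
  then show ?thesis
    using f assms(5) by auto
qed

lemma matching_switch:
  assumes A: "matching A" and B: "matching B" and K: "K = component_of (sym_diff A B) W a"
  shows "matching (switch A B K)"
proof -
  have cross: "disjnt e f" if "e \<in> {e\<in>A. \<not> e \<subseteq> K}" and "f \<in> {e\<in>B. e \<subseteq> K}" for e f
  proof (rule ccontr)
    have e: "e \<in> A" "\<not> e \<subseteq> K" and f: "f \<in> B" "f \<subseteq> K"
      using that by auto
    assume "\<not> disjnt e f"
    then obtain y where y: "y \<in> e" "y \<in> f"
      by (auto simp: disjnt_def)
    show False
    proof (cases "e \<in> B")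
      case True
      have "e = f"
        by (rule matching_unique_edge[OF B True f(1) y])
      then show False
        using e f by simp
    next
      case False
      have "e \<subseteq> K"
        using edge_subset_component_of[of "sym_diff A B" e y a] A B K y f e False
        unfolding matching_on_def by auto
      then show False
        using e by simp
    qed
  qed
  have "matching {e\<in>A. \<not> e \<subseteq> K}" "matching {e\<in>B. e \<subseteq> K}"
    by (rule matching_on_subset[OF A], blast) (rule matching_on_subset[OF B], blast)
  then have "pairwise disjnt (switch A B K)"
    unfolding switch_def matching_on_def using cross by (intro pairwise_disjnt_Un) auto
  then show ?thesis
    using A B unfolding matching_on_def switch_def by auto
qed

text \<open>Both switches are matchings, so maximality of \<open>A\<close> and \<open>B\<close> forces them to have equally
  many edges inside \<open>K\<close>.\<close>

lemma max_matching_switch: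
  assumes A: "max_matching A" and B: "max_matching B" and K: "K = component_of (sym_diff A B) W a"
  shows "max_matching (switch A B K)"
proof -
  have mA: "matching A" and mB: "matching B"
    using A B unfolding max_matching_on_def by auto
  have AB: "matching (switch A B K)"
    by (rule matching_switch[OF mA mB K])
  have BA: "matching (switch B A K)"
    using matching_switch[OF mB mA] K by (simp add: Un_commute)
  have "card (switch A B K) \<le> card A" "card (switch B A K) \<le> card B" "card A = card B"
    using A B AB BA unfolding max_matching_on_def by (auto intro: le_antisym)
  moreover have "finite A" "finite B"
    using finite_matching mA mB by auto
  ultimately have "card (switch A B K) = card A"
    using card_switch[of A B K] card_switch[of B A K] by linarith
  then show ?thesis
    using A AB unfolding max_matching_on_def by simp
qed

lemma card_incident_sym_diff_le_2:
  assumes "matching A" "matching B"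
  shows "card {e \<in> sym_diff A B. y \<in> e} \<le> 2"
proof -
  have at_most_one: "card {e\<in>M. y \<in> e} \<le> 1" if "matching M" for M
  proof -
    have "finite {e\<in>M. y \<in> e}"
      using finite_matching[OF that] by simp
    moreover have "\<forall>e\<in>{e\<in>M. y \<in> e}. \<forall>f\<in>{e\<in>M. y \<in> e}. e = f"
      using matching_unique_edge[OF that] by blast
    ultimately show ?thesis
      using card_le_Suc0_iff_eq[of "{e\<in>M. y \<in> e}"] by simp
  qed
  have "finite ({e\<in>A. y \<in> e} \<union> {e\<in>B. y \<in> e})"
    using assms finite_matching by simp
  moreover have "{e \<in> sym_diff A B. y \<in> e} \<subseteq> {e\<in>A. y \<in> e} \<union> {e\<in>B. y \<in> e}"
    by auto
  ultimately have "card {e \<in> sym_diff A B. y \<in> e} \<le> card ({e\<in>A. y \<in> e} \<union> {e\<in>B. y \<in> e})"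
    by (rule card_mono)
  then show ?thesis
    using at_most_one[OF assms(1)] at_most_one[OF assms(2)]
      card_Un_le[of "{e\<in>A. y \<in> e}" "{e\<in>B. y \<in> e}"] by linarith
qed

lemma card_incident_sym_diff_eq_1:
  assumes "matching B" "y \<notin> \<Union>A" "y \<in> \<Union>B"
  shows "card {e \<in> sym_diff A B. y \<in> e} = 1"
proof -
  obtain e where e: "e \<in> B" "y \<in> e"
    using assms(3) by blast
  have "{e \<in> sym_diff A B. y \<in> e} = {e}"
    using matching_unique_edge[OF assms(1) e(1)] e assms(2) by auto
  then show ?thesis
    by simp
qed

text \<open>Components of the symmetric difference of two matchings are paths or cycles. Counting
  argument: a connected graph on \<open>K\<close> has at least \<open>card K - 1\<close> edges, while its degree sum is
  at most \<open>2 * card K\<close> minus the number of vertices of degree 1.\<close>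

lemma card_ends_component_sym_diff_le_2:
  assumes A: "matching A" and B: "matching B"
    and K: "K = component_of (sym_diff A B) W a" and a: "a \<in> W"
  shows "card {y\<in>K. card {e \<in> sym_diff A B. y \<in> e} = 1} \<le> 2"
proof -
  define D where "D = sym_diff A B"
  define DK where "DK = {e\<in>D. e \<subseteq> K}"
  define deg where "deg y = card {e\<in>D. y \<in> e}" for y
  define P where "P = {y\<in>K. deg y = 1}"
  have DE: "D \<subseteq> E" and DW: "\<forall>e\<in>D. e \<subseteq> W"
    using A B unfolding D_def matching_on_def by auto
  have fin_K: "finite K"
    using K component_of_subset finite_vertices by (metis finite_subset)
  have fin_DK: "finite DK"
    using finite_matching[OF A] finite_matching[OF B] unfolding DK_def D_def by simp
  have edge_DK: "card e = 2 \<and> e \<subseteq> K" if "e \<in> DK" for e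
    using that DE card_edge unfolding DK_def by auto
  have "a \<in> K"
    using K a mem_component_of_self by metis
  then have "components_on DK K = {K}"
    unfolding components_on_def DK_def using component_of_restrict[OF K[folded D_def]] by auto
  moreover have "\<forall>e\<in>DK. \<exists>x y. e = {x, y} \<and> x \<in> K \<and> y \<in> K"
    using edge_DK by (metis card_2_iff insert_subset)
  ultimately have connected: "card K \<le> card DK + 1"
    using card_le_card_edges_add_card_components[OF fin_K fin_DK] by simp
  have "{e\<in>DK. y \<in> e} = {e\<in>D. y \<in> e}" if "y \<in> K" for y
    using edge_subset_component_of[OF DE _ _ _ that[unfolded K, folded D_def]] DW K
    unfolding DK_def D_def by auto
  then have "(\<Sum>y\<in>K. deg y) = 2 * card DK"
    using sum_card_incident_edges[OF fin_K fin_DK] edge_DK unfolding deg_def by simp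
  moreover have "(\<Sum>y\<in>K. deg y) + card P \<le> 2 * card K"
    unfolding P_def
    by (rule sum_add_card_eq_1_le[OF fin_K])
      (use card_incident_sym_diff_le_2[OF A B] in \<open>simp add: deg_def D_def\<close>)
  ultimately show ?thesis
    using connected unfolding P_def deg_def D_def by linarith
qed

lemma max_matching_missing_two:
  assumes A: "max_matching A" and B: "max_matching B"
    and y: "y \<notin> \<Union>A" "y \<in> \<Union>B" and c: "c \<notin> \<Union>B" "c \<notin> component_of (sym_diff A B) W y"
  shows "\<exists>M. max_matching M \<and> y \<notin> \<Union>M \<and> c \<notin> \<Union>M"
proof -
  define K where "K = component_of (sym_diff A B) W y"
  have mA: "matching A" and mB: "matching B"
    using A B unfolding max_matching_on_def by auto
  obtain e where e: "e \<in> B" "y \<in> e"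
    using y(2) by blast
  have "e \<subseteq> W" "sym_diff A B \<subseteq> E" "\<forall>f\<in>sym_diff A B. f \<subseteq> W"
    using e mA mB unfolding matching_on_def by auto
  moreover have "e \<in> sym_diff A B"
    using e y(1) by blast
  moreover have "y \<in> K"
    unfolding K_def using mem_component_of_self \<open>e \<subseteq> W\<close> e(2) by blast
  ultimately have "e \<subseteq> K"
    using edge_subset_component_of[of "sym_diff A B" e y y] e(2) unfolding K_def by blast
  have "max_matching (switch B A K)"
    using max_matching_switch[OF B A] K_def by (simp add: Un_commute)
  moreover have "y \<notin> \<Union>(switch B A K)"
  proof
    assume "y \<in> \<Union>(switch B A K)"
    then obtain f where f: "f \<in> switch B A K" "y \<in> f"
      by blast
    show False
    proof (cases "f \<in> B")
      case True
      have "f = e"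
        by (rule matching_unique_edge[OF mB True e(1) f(2) e(2)])
      then show False
        using f(1) \<open>e \<subseteq> K\<close> y(1) e(2) unfolding switch_def by blast
    next
      case False
      then show False
        using f y(1) unfolding switch_def by blast
    qed
  qed
  moreover have "c \<notin> \<Union>(switch B A K)"
    using c K_def unfolding switch_def by blast
  ultimately show ?thesis
    by blast
qed

lemma max_matching_missing_pair:
  assumes A: "max_matching A" and B: "max_matching B" and distinct: "a \<noteq> b" "a \<noteq> c" "b \<noteq> c"
    and uncovered: "a \<notin> \<Union>A" "b \<notin> \<Union>A" "c \<notin> \<Union>B"
    and covered: "a \<in> \<Union>B" "b \<in> \<Union>B" "c \<in> \<Union>A"
  shows "\<exists>M. max_matching M \<and> c \<notin> \<Union>M \<and> (a \<notin> \<Union>M \<or> b \<notin> \<Union>M)"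
proof (cases "c \<in> component_of (sym_diff A B) W a \<and> c \<in> component_of (sym_diff A B) W b")
  case False
  then consider "c \<notin> component_of (sym_diff A B) W a" | "c \<notin> component_of (sym_diff A B) W b"
    by blast
  then show ?thesis
  proof cases
    case 1
    then show ?thesis
      using max_matching_missing_two[OF A B uncovered(1) covered(1) uncovered(3)] by blast
  next
    case 2
    then show ?thesis
      using max_matching_missing_two[OF A B uncovered(2) covered(2) uncovered(3)] by blast
  qed
next
  case True
  define K where "K = component_of (sym_diff A B) W a"
  define P where "P = {y\<in>K. card {e \<in> sym_diff A B. y \<in> e} = 1}"
  have mA: "matching A" and mB: "matching B"
    using A B unfolding max_matching_on_def by auto
  have W: "a \<in> W" "b \<in> W"
    using covered mB unfolding matching_on_def by auto
  have "component_of (sym_diff A B) W b = K"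
    using component_of_eq[of c "sym_diff A B" W a] component_of_eq[of c "sym_diff A B" W b] True
    unfolding K_def by simp
  then have "b \<in> K"
    using mem_component_of_self[of b W "sym_diff A B"] W(2) by simp
  moreover have "a \<in> K"
    unfolding K_def using W(1) by (rule mem_component_of_self)
  moreover have "c \<in> K"
    using True unfolding K_def by blast
  moreover have "card {e \<in> sym_diff A B. a \<in> e} = 1" "card {e \<in> sym_diff A B. b \<in> e} = 1"
    using card_incident_sym_diff_eq_1[OF mB] uncovered covered by auto
  moreover have "card {e \<in> sym_diff B A. c \<in> e} = 1"
    using card_incident_sym_diff_eq_1[OF mA uncovered(3) covered(3)] .
  then have "card {e \<in> sym_diff A B. c \<in> e} = 1"
    by (simp add: Un_commute)
  ultimately have "{a, b, c} \<subseteq> P"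
    unfolding P_def by blast
  moreover have "P \<subseteq> W"
    unfolding P_def K_def using component_of_subset by blast
  then have "finite P"
    using finite_vertices by (rule finite_subset)
  ultimately have "card {a, b, c} \<le> card P"
    by (simp add: card_mono)
  then show ?thesis
    using card_ends_component_sym_diff_le_2[OF mA mB K_def W(1)] distinct unfolding P_def by simp
qed

text \<open>Gallai's lemma, in the form needed for the Tutte--Berge formula: if every vertex is missed
  by some maximum matching, no maximum matching misses two vertices joined by a path. For a
  shortest counterexample \<open>u \<dots> v\<close> with successor \<open>w\<close> of \<open>u\<close>, a maximum matching missing \<open>w\<close>
  is switched on a component of its symmetric difference with \<open>M\<close>.\<close>

lemma max_matching_misses_no_joined_pair:
  assumes missable: "\<forall>v\<in>W. \<exists>M. max_matching M \<and> v \<notin> \<Union>M"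
  shows "max_matching M \<Longrightarrow> u \<notin> \<Union>M \<Longrightarrow> v \<notin> \<Union>M \<Longrightarrow> u \<noteq> v \<Longrightarrow> (u, v) \<notin> adj_rel E W ^^ d"
proof (induction d arbitrary: M u v rule: less_induct)
  case (less d)
  show ?case
  proof
    assume path: "(u, v) \<in> adj_rel E W ^^ d"
    then obtain d' where d: "d = Suc d'"
      using less.prems(4) by (cases d) auto
    then obtain w where uw: "(u, w) \<in> adj_rel E W" and wv: "(w, v) \<in> adj_rel E W ^^ d'"
      using path relpow_Suc_E2 by metis
    have "w \<in> W"
      using uw by (simp add: adj_rel_def)
    have "u \<noteq> w"
      using adj_rel_irrefl[OF uw] .
    have "w \<in> \<Union>M"
      using max_matching_covers_edge[OF less.prems(1) uw] less.prems(2) by blast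
    then have "v \<noteq> w"
      using less.prems(3) by blast
    obtain M2 where M2: "max_matching M2" "w \<notin> \<Union>M2"
      using missable \<open>w \<in> W\<close> by blast
    have "u \<in> \<Union>M2"
      using max_matching_covers_edge[OF M2(1) uw] M2(2) by blast
    have "v \<in> \<Union>M2"
      using less.IH[of d' M2 w v] d M2 \<open>v \<noteq> w\<close> wv by blast
    obtain M3 where M3: "max_matching M3" "w \<notin> \<Union>M3" "u \<notin> \<Union>M3 \<or> v \<notin> \<Union>M3"
      using max_matching_missing_pair[OF less.prems(1) M2(1) less.prems(4) \<open>u \<noteq> w\<close> \<open>v \<noteq> w\<close>
          less.prems(2,3) M2(2) \<open>u \<in> \<Union>M2\<close> \<open>v \<in> \<Union>M2\<close> \<open>w \<in> \<Union>M\<close>]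
      by blast
    show False
      using M3 max_matching_covers_edge[OF M3(1) uw] less.IH[of d' M3 w v] d \<open>v \<noteq> w\<close> wv by blast
  qed
qed

lemma card_component_uncovered_le_1:
  assumes missable: "\<forall>v\<in>W. \<exists>M. max_matching M \<and> v \<notin> \<Union>M"
    and M: "max_matching M" and C: "C \<in> components_on E W"
  shows "card (C - \<Union>M) \<le> 1"
proof -
  have "finite (C - \<Union>M)"
    using components_on_subset[OF C] finite_vertices by (meson finite_Diff finite_subset)
  moreover have "x = y" if "x \<in> C - \<Union>M" "y \<in> C - \<Union>M" for x y
  proof (rule ccontr)
    assume "x \<noteq> y"
    have "(x, y) \<in> (adj_rel E W)\<^sup>*"
      using components_on_connected[OF C] that by blast
    then obtain d where "(x, y) \<in> adj_rel E W ^^ d"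
      using rtrancl_power by blast
    then show False
      using max_matching_misses_no_joined_pair[OF missable M] that \<open>x \<noteq> y\<close> by blast
  qed
  ultimately show ?thesis
    using card_le_Suc0_iff_eq[of "C - \<Union>M"] by simp
qed

lemma card_half_component_le:
  assumes missable: "\<forall>v\<in>W. \<exists>M. max_matching M \<and> v \<notin> \<Union>M"
    and M: "max_matching M" and C: "C \<in> components_on E W"
  shows "card C div 2 \<le> card {e\<in>M. e \<subseteq> C}"
proof -
  have mM: "matching M"
    using M unfolding max_matching_on_def by blast
  have fin_C: "finite C"
    using components_on_subset[OF C] finite_vertices by (rule finite_subset)
  obtain v where C_eq: "C = component_of E W v"
    using C unfolding components_on_def by blast
  have "C \<inter> \<Union>M \<subseteq> \<Union>{e\<in>M. e \<subseteq> C}"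
  proof
    fix x
    assume "x \<in> C \<inter> \<Union>M"
    then obtain e where e: "e \<in> M" "x \<in> e" "x \<in> C"
      by blast
    have "e \<in> E" "e \<subseteq> W"
      using e(1) mM unfolding matching_on_def by auto
    then have "e \<subseteq> C"
      using edge_subset_component_of[OF subset_refl _ _ e(2), of v] e(3) C_eq by simp
    then show "x \<in> \<Union>{e\<in>M. e \<subseteq> C}"
      using e by blast
  qed
  then have "C \<inter> \<Union>M = \<Union>{e\<in>M. e \<subseteq> C}"
    by blast
  moreover have "card (\<Union>{e\<in>M. e \<subseteq> C}) = 2 * card {e\<in>M. e \<subseteq> C}"
    by (rule card_Union_matching[OF matching_on_subset[OF mM]]) blast
  ultimately have "card (C \<inter> \<Union>M) = 2 * card {e\<in>M. e \<subseteq> C}"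
    by simp
  then have "card C \<le> 2 * card {e\<in>M. e \<subseteq> C} + 1"
    using card_Int_Diff[OF fin_C, of "\<Union>M"] card_component_uncovered_le_1[OF missable M C]
    by linarith
  then have "card C div 2 \<le> (2 * card {e\<in>M. e \<subseteq> C} + 1) div 2"
    by (rule div_le_mono)
  then show ?thesis
    by simp
qed

lemma sum_half_components_le_card_max_matching:
  assumes missable: "\<forall>v\<in>W. \<exists>M. max_matching M \<and> v \<notin> \<Union>M" and M: "max_matching M"
  shows "(\<Sum>C\<in>components_on E W. card C div 2) \<le> card M"
proof -
  have fin_M: "finite M"
    using M finite_matching unfolding max_matching_on_def by blast
  have disjoint: "{e\<in>M. e \<subseteq> C} \<inter> {e\<in>M. e \<subseteq> C'} = {}"
    if CC': "C \<in> components_on E W" "C' \<in> components_on E W" "C \<noteq> C'" for C C'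
  proof -
    have "C \<inter> C' = {}"
      by (rule components_on_disjoint[OF CC'])
    moreover have "e \<noteq> {}" if "e \<in> M" for e
      using that M card_edge unfolding max_matching_on_def matching_on_def by fastforce
    ultimately show ?thesis
      by blast
  qed
  have "(\<Sum>C\<in>components_on E W. card C div 2) \<le> (\<Sum>C\<in>components_on E W. card {e\<in>M. e \<subseteq> C})"
    using card_half_component_le[OF missable M] by (rule sum_mono)
  also have "\<dots> = card (\<Union>C\<in>components_on E W. {e\<in>M. e \<subseteq> C})"
    by (rule card_UN_disjoint[symmetric])
      (use finite_components_on[OF finite_vertices] fin_M disjoint in auto)
  also have "\<dots> \<le> card M"
    using fin_M by (intro card_mono) auto
  finally show ?thesis .
qed

lemma card_matching_avoiding_essential_lt:
  assumes M0: "max_matching M0" and essential: "\<forall>M. max_matching M \<longrightarrow> v \<in> \<Union>M"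
    and M: "matching_on E (W - {v}) M"
  shows "card M < card M0"
proof -
  have "matching M"
    using M unfolding matching_on_def by auto
  moreover have "\<not> max_matching M"
    using essential M unfolding matching_on_def by blast
  ultimately show ?thesis
    using M0 unfolding max_matching_on_def by (meson le_trans not_less)
qed

end

text \<open>The easy half of the Tutte--Berge formula. A vertex covered by every maximum matching is
  put into the barrier; once no such vertex is left, Gallai's lemma shows that every component is
  covered by a maximum matching up to at most one vertex.\<close>

theorem tutte_berge_barrier:
  assumes edges: "\<forall>e\<in>E. card e = 2" and "finite W" and "\<forall>M. matching_on E W M \<longrightarrow> card M \<le> s"
  shows "\<exists>X\<subseteq>W. card X + (\<Sum>C\<in>components_on E (W - X). card C div 2) \<le> s"
  using assms(2,3)
proof (induction "card W" arbitrary: W s rule: less_induct)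
  case less
  interpret finite_graph E W
    using edges less.prems(1) by unfold_locales auto
  obtain M0 where M0: "max_matching M0"
    using ex_max_matching by blast
  have "card M0 \<le> s"
    using less.prems(2) M0 unfolding max_matching_on_def by blast
  show ?case
  proof (cases "\<exists>v\<in>W. \<forall>M. max_matching M \<longrightarrow> v \<in> \<Union>M")
    case True
    then obtain v where v: "v \<in> W" "\<forall>M. max_matching M \<longrightarrow> v \<in> \<Union>M"
      by blast
    have "\<forall>M. matching_on E (W - {v}) M \<longrightarrow> card M \<le> card M0 - 1"
      using card_matching_avoiding_essential_lt[OF M0 v(2)] by fastforce
    then obtain X where X: "X \<subseteq> W - {v}"
      "card X + (\<Sum>C\<in>components_on E (W - {v} - X). card C div 2) \<le> card M0 - 1"
      using less.hyps[OF card_Diff1_less[OF finite_vertices v(1)] finite_Diff[OF finite_vertices]]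
      by blast
    have "finite X"
      using X(1) finite_vertices by (meson finite_Diff finite_subset)
    then have "card (insert v X) = card X + 1"
      using X(1) by (simp add: subset_Diff_insert)
    moreover have "0 < card M0"
      using card_matching_avoiding_essential_lt[OF M0 v(2), of "{}"] by (simp add: matching_on_def)
    moreover have "W - insert v X = W - {v} - X"
      by blast
    ultimately have "card (insert v X) + (\<Sum>C\<in>components_on E (W - insert v X). card C div 2) \<le> s"
      using X(2) \<open>card M0 \<le> s\<close> by simp
    moreover have "insert v X \<subseteq> W"
      using X(1) v(1) by blast
    ultimately show ?thesis
      by blast
  next
    case False
    then have "(\<Sum>C\<in>components_on E W. card C div 2) \<le> card M0"
      using sum_half_components_le_card_max_matching[OF _ M0] by blast
    then show ?thesis
      using \<open>card M0 \<le> s\<close> by (intro exI[of _ "{}"]) auto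
  qed
qed

section \<open>Graphs on \<open>{0..<n}\<close>\<close>

lemma is_graph_card_edge: "is_graph n E \<Longrightarrow> e \<in> E \<Longrightarrow> card e = 2"
  unfolding is_graph_def by auto

lemma is_graph_loop_free: "is_graph n E \<Longrightarrow> {w} \<notin> E"
  using is_graph_card_edge[of n E "{w}"] by auto

lemma is_graph_finite: "is_graph n E \<Longrightarrow> finite E"
proof -
  assume "is_graph n E"
  then have "E \<subseteq> Pow {0..<n}"
    unfolding is_graph_def by auto
  then show "finite E"
    by (rule finite_subset) simp
qed

definition neighbours_in :: "nat set set \<Rightarrow> nat set \<Rightarrow> nat \<Rightarrow> nat set" where
  "neighbours_in E S w = {u\<in>S. {u, w} \<in> E}"

lemma card_incident_edges_eq_card_neighbours:
  assumes g: "is_graph n E"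
  shows "card {e\<in>E. w \<in> e} = card (neighbours_in E {0..<n} w)"
proof -
  have "inj_on (\<lambda>u. {u, w}) (neighbours_in E {0..<n} w)"
    using is_graph_loop_free[OF g] by (auto simp: inj_on_def neighbours_in_def doubleton_eq_iff)
  moreover have "(\<lambda>u. {u, w}) ` neighbours_in E {0..<n} w = {e\<in>E. w \<in> e}"
  proof
    show "(\<lambda>u. {u, w}) ` neighbours_in E {0..<n} w \<subseteq> {e\<in>E. w \<in> e}"
      unfolding neighbours_in_def by auto
    show "{e\<in>E. w \<in> e} \<subseteq> (\<lambda>u. {u, w}) ` neighbours_in E {0..<n} w"
    proof
      fix e
      assume e: "e \<in> {e\<in>E. w \<in> e}"
      then obtain u v where uv: "e = {u, v}" "u < n" "v < n"
        using g unfolding is_graph_def by blast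
      define z where "z = (if u = w then v else u)"
      have "e = {z, w}" "z < n"
        using uv e unfolding z_def by auto
      then show "e \<in> (\<lambda>u. {u, w}) ` neighbours_in E {0..<n} w"
        using e unfolding neighbours_in_def by auto
    qed
  qed
  ultimately show ?thesis
    by (metis card_image)
qed

lemma twice_card_edges_eq_sum_degrees:
  assumes g: "is_graph n E"
  shows "2 * card E = (\<Sum>w\<in>{0..<n}. card (neighbours_in E {0..<n} w))"
proof -
  have "\<forall>e\<in>E. card e = 2 \<and> e \<subseteq> {0..<n}"
    using g unfolding is_graph_def by auto
  then have "(\<Sum>w\<in>{0..<n}. card {e\<in>E. w \<in> e}) = 2 * card E"
    using sum_card_incident_edges[OF _ is_graph_finite[OF g]] by simp
  then show ?thesis
    using card_incident_edges_eq_card_neighbours[OF g] by simp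
qed

lemma card_neighbours_in_split:
  assumes "finite V" "X \<subseteq> V"
  shows "card (neighbours_in E V w) = card (neighbours_in E X w) + card (neighbours_in E (V - X) w)"
proof -
  have "neighbours_in E V w = neighbours_in E X w \<union> neighbours_in E (V - X) w"
    using assms(2) unfolding neighbours_in_def by auto
  moreover have "finite X"
    using assms finite_subset by blast
  then have "finite (neighbours_in E X w)" "finite (neighbours_in E (V - X) w)"
    using assms(1) unfolding neighbours_in_def by auto
  moreover have "neighbours_in E X w \<inter> neighbours_in E (V - X) w = {}"
    unfolding neighbours_in_def by auto
  ultimately show ?thesis
    by (simp add: card_Un_disjoint)
qed

lemma sum_card_neighbours_in_swap:
  assumes "finite A" "finite B"
  shows "(\<Sum>w\<in>A. card (neighbours_in E B w)) = (\<Sum>w\<in>B. card (neighbours_in E A w))"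
proof -
  have "(\<Sum>w\<in>A. card (neighbours_in E B w)) = (\<Sum>w\<in>A. \<Sum>u\<in>B. if {u, w} \<in> E then 1 else 0)"
    unfolding neighbours_in_def using assms by (simp add: sum.If_cases Int_def)
  also have "\<dots> = (\<Sum>u\<in>B. \<Sum>w\<in>A. if {w, u} \<in> E then 1 else 0)"
    by (subst sum.swap) (simp add: insert_commute)
  also have "\<dots> = (\<Sum>w\<in>B. card (neighbours_in E A w))"
    unfolding neighbours_in_def using assms by (simp add: sum.If_cases Int_def)
  finally show ?thesis .
qed

lemma card_neighbours_in_le:
  assumes g: "is_graph n E" and "finite C" "w \<in> C"
  shows "card (neighbours_in E C w) \<le> card C - 1"
proof -
  have "neighbours_in E C w \<subseteq> C - {w}"
    using is_graph_loop_free[OF g] unfolding neighbours_in_def by auto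
  then have "card (neighbours_in E C w) \<le> card (C - {w})"
    using assms(2) by (intro card_mono) auto
  then show ?thesis
    using assms(2,3) by simp
qed

lemma sum_degrees_components_on:
  assumes "finite Y"
  shows "(\<Sum>w\<in>Y. card (neighbours_in E Y w))
    = (\<Sum>C\<in>components_on E Y. \<Sum>w\<in>C. card (neighbours_in E C w))"
proof -
  have fin: "\<forall>C\<in>components_on E Y. finite C"
  proof
    fix C
    assume "C \<in> components_on E Y"
    then have "C \<subseteq> Y"
      by (rule components_on_subset)
    then show "finite C"
      using assms by (rule finite_subset)
  qed
  have disj: "\<forall>C\<in>components_on E Y. \<forall>C'\<in>components_on E Y. C \<noteq> C' \<longrightarrow> C \<inter> C' = {}"
    by (intro ballI impI) (rule components_on_disjoint)
  have "(\<Sum>w\<in>Y. card (neighbours_in E Y w))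
      = (\<Sum>C\<in>components_on E Y. \<Sum>w\<in>C. card (neighbours_in E Y w))"
    using sum.Union_disjoint[OF fin disj, of "\<lambda>w. card (neighbours_in E Y w)"]
    by (simp add: Union_components_on)
  also have "\<dots> = (\<Sum>C\<in>components_on E Y. \<Sum>w\<in>C. card (neighbours_in E C w))"
  proof (intro sum.cong refl)
    fix C w
    assume C: "C \<in> components_on E Y" and w: "w \<in> C"
    have "neighbours_in E Y w \<subseteq> neighbours_in E C w"
    proof
      fix u
      assume "u \<in> neighbours_in E Y w"
      then have "{w, u} \<in> E" "u \<in> Y"
        unfolding neighbours_in_def by (auto simp: insert_commute)
      then show "u \<in> neighbours_in E C w"
        using components_on_edge[OF C w] \<open>u \<in> neighbours_in E Y w\<close>
        unfolding neighbours_in_def by blast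
    qed
    moreover have "neighbours_in E C w \<subseteq> neighbours_in E Y w"
      using components_on_subset[OF C] unfolding neighbours_in_def by auto
    ultimately show "card (neighbours_in E Y w) = card (neighbours_in E C w)"
      by (simp add: subset_antisym)
  qed
  finally show ?thesis .
qed

lemma twice_card_edges_split:
  assumes g: "is_graph n E" and X: "X \<subseteq> {0..<n}"
  shows "2 * card E = (\<Sum>w\<in>X. card (neighbours_in E X w))
      + 2 * (\<Sum>w\<in>{0..<n} - X. card (neighbours_in E X w))
      + (\<Sum>C\<in>components_on E ({0..<n} - X). \<Sum>w\<in>C. card (neighbours_in E C w))"
proof -
  define Y where "Y = {0..<n} - X"
  define dX where "dX w = card (neighbours_in E X w)" for w
  define dY where "dY w = card (neighbours_in E Y w)" for w
  have fin: "finite {0..<n}" "finite X" "finite Y"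
    using X finite_subset unfolding Y_def by auto
  have "2 * card E = (\<Sum>w\<in>{0..<n}. dX w + dY w)"
    using twice_card_edges_eq_sum_degrees[OF g] card_neighbours_in_split[OF fin(1) X]
    unfolding dX_def dY_def Y_def by simp
  also have "\<dots> = (\<Sum>w\<in>Y. dX w + dY w) + (\<Sum>w\<in>X. dX w + dY w)"
    unfolding Y_def by (rule sum.subset_diff[OF X fin(1)])
  also have "\<dots> = (\<Sum>w\<in>X. dX w) + (\<Sum>w\<in>Y. dX w) + (\<Sum>w\<in>X. dY w) + (\<Sum>w\<in>Y. dY w)"
    by (simp add: sum.distrib)
  also have "(\<Sum>w\<in>X. dY w) = (\<Sum>w\<in>Y. dX w)"
    unfolding dX_def dY_def by (rule sum_card_neighbours_in_swap[OF fin(2,3)])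
  also have "(\<Sum>w\<in>Y. dY w) = (\<Sum>C\<in>components_on E Y. \<Sum>w\<in>C. card (neighbours_in E C w))"
    unfolding dY_def by (rule sum_degrees_components_on[OF fin(3)])
  finally show ?thesis
    unfolding dX_def Y_def by simp
qed

lemma matching_number_le:
  assumes no_match: "\<not> contains_matching E (s + 1)" and M: "matching_on E W M"
  shows "card M \<le> s"
proof (rule ccontr)
  assume "\<not> card M \<le> s"
  then have "s + 1 \<le> card M"
    by simp
  then obtain M' where M': "M' \<subseteq> M" "card M' = s + 1"
    by (rule obtain_subset_with_card_n)
  have "M' \<subseteq> E"
    using M'(1) M unfolding matching_on_def by blast
  moreover have "\<forall>e\<in>M'. \<forall>f\<in>M'. e \<noteq> f \<longrightarrow> e \<inter> f = {}"
    using M'(1) M unfolding matching_on_def pairwise_def disjnt_def by blast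
  ultimately have "contains_matching E (s + 1)"
    unfolding contains_matching_def using M'(2) by blast
  then show False
    using no_match by contradiction
qed

lemma xG_attained:
  assumes g: "is_graph n E" and no_match: "\<not> contains_matching E (s + 1)"
  shows "\<exists>X. admissible n E s X \<and> card X = xG n E s"
proof -
  have edges: "\<forall>e\<in>E. card e = 2"
    using is_graph_card_edge[OF g] by blast
  have matchings: "\<forall>M. matching_on E {0..<n} M \<longrightarrow> card M \<le> s"
    using matching_number_le[OF no_match] by blast
  obtain X where
    "X \<subseteq> {0..<n}" "card X + (\<Sum>C\<in>components_on E ({0..<n} - X). card C div 2) \<le> s"
    using tutte_berge_barrier[OF edges finite_atLeastLessThan matchings] by blast
  then have adm: "admissible n E s X"
    unfolding admissible_def components_eq_components_on by simp
  have "{card X | X. admissible n E s X} \<subseteq> {..n}"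
  proof
    fix c
    assume "c \<in> {card X | X. admissible n E s X}"
    then obtain Y where "admissible n E s Y" "c = card Y"
      by blast
    then have "Y \<subseteq> {0..<n}"
      unfolding admissible_def by blast
    then show "c \<in> {..n}"
      using card_mono[OF _ \<open>Y \<subseteq> {0..<n}\<close>] \<open>c = card Y\<close> by simp
  qed
  then have "finite {card X | X. admissible n E s X}"
    by (rule finite_subset) simp
  moreover have "{card X | X. admissible n E s X} \<noteq> {}"
    using adm by blast
  ultimately have "xG n E s \<in> {card X | X. admissible n E s X}"
    unfolding xG_def by (rule Max_in)
  then obtain Y where "xG n E s = card Y" "admissible n E s Y"
    unfolding mem_Collect_eq by blast
  then show ?thesis
    by (intro exI[of _ Y]) simp
qed

section \<open>Arithmetic estimates\<close>

lemma le_pred_add_choose: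
  assumes "1 \<le> l"
  shows "d \<le> (l - 1) + (d choose l)"
proof (cases "l \<le> d")
  case True
  obtain l' where l: "l = Suc l'"
    using assms by (cases l) auto
  have "d - l + 1 \<le> d choose l"
    using True
  proof (induction d rule: dec_induct)
    case base
    then show ?case
      by simp
  next
    case (step m)
    have "Suc m choose l = (m choose l') + (m choose l)"
      using l by simp
    moreover have "0 < m choose l'"
      using step.hyps l by simp
    ultimately show ?case
      using step.IH step.hyps by linarith
  qed
  then show ?thesis
    by linarith
qed simp

lemma sum_squared_le_card_mult_sum_squares_nat:
  fixes a :: "'a \<Rightarrow> nat"
  shows "(\<Sum>i\<in>A. a i)\<^sup>2 \<le> card A * (\<Sum>i\<in>A. (a i)\<^sup>2)"
proof -
  have "real ((\<Sum>i\<in>A. a i)\<^sup>2) \<le> real (card A * (\<Sum>i\<in>A. (a i)\<^sup>2))"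
    using sum_squared_le_sum_of_squares[of "\<lambda>i. real (a i)" A] by (simp add: mult.commute)
  then show ?thesis
    by (simp only: of_nat_le_iff)
qed

lemma twice_choose_two: "2 * (n choose 2) = n * (n - 1)"
proof (induction n)
  case (Suc n)
  have "Suc n choose 2 = n + (n choose 2)"
    by (simp add: numeral_2_eq_2)
  then show ?case
    using Suc by (cases n) (auto simp: algebra_simps)
qed simp

lemma choose_two_le_choose: "2 \<le> r \<Longrightarrow> r \<le> m \<Longrightarrow> (m - r + 2) choose 2 \<le> m choose r"
proof (induction r arbitrary: m rule: dec_induct)
  case (step r m)
  obtain m' where m: "m = Suc m'"
    using step.prems by (cases m) auto
  have "m' - r + 2 choose 2 \<le> m' choose r"
    using step.IH[of m'] step.prems m by simp
  moreover have "m' choose r \<le> m choose Suc r"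
    using m by simp
  ultimately show ?case
    using m by simp
next
  case base
  then have "m - 2 + 2 = m"
    by simp
  then show ?case
    by simp
qed

lemma choose_diff_ge:
  assumes "3 \<le> l" "k + l \<le> s"
  shows "k * k + k + ((s - k) choose l) \<le> s choose l"
  using assms(2)
proof (induction k arbitrary: s)
  case (Suc k)
  obtain s' where s: "s = Suc s'"
    using Suc.prems by (cases s) auto
  obtain l' where l: "l = Suc l'"
    using assms(1) by (cases l) auto
  have "k * k + k + ((s' - k) choose l) \<le> s' choose l"
    using Suc.IH[of s'] Suc.prems s by simp
  moreover have "s choose l = (s' choose l') + (s' choose l)"
    using s l by simp
  moreover have "(k + 3) choose 2 \<le> s' choose l'"
  proof -
    have "(k + 3) choose 2 \<le> (s' - l' + 2) choose 2"
      by (rule binomial_right_mono) (use Suc.prems s l in auto)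
    also have "\<dots> \<le> s' choose l'"
      by (rule choose_two_le_choose) (use assms(1) l Suc.prems s in auto)
    finally show ?thesis .
  qed
  moreover have "2 * ((k + 3) choose 2) = (k + 3) * (k + 2)"
    using twice_choose_two[of "k + 3"] by simp
  ultimately show ?case
    using s by (simp add: algebra_simps)
qed simp

lemma choose_two_diff_bound:
  assumes "2 \<le> t" "k + 2 \<le> s"
  shows "k * s + k + 2 * (t - 1) * ((s - k) choose 2) \<le> 2 * (t - 1) * (s choose 2)"
proof -
  obtain m where s: "s = k + m + 2"
    using assms(2) by (metis add.commute add.left_commute le_iff_add)
  have "k * s + k + (m + 2) * (m + 1) \<le> (k + m + 2) * (k + m + 1)"
    using s by (simp add: algebra_simps)
  then have "k * s + k + 2 * ((s - k) choose 2) \<le> 2 * (s choose 2)"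
    using twice_choose_two[of s] twice_choose_two[of "m + 2"] s by simp
  then have "(t - 1) * (k * s + k + 2 * ((s - k) choose 2)) \<le> (t - 1) * (2 * (s choose 2))"
    by (rule mult_le_mono2)
  moreover have "(t - 1) * (k * s + k + 2 * ((s - k) choose 2))
      = (t - 1) * (k * s + k) + 2 * (t - 1) * ((s - k) choose 2)"
    by (simp add: add_mult_distrib2)
  moreover have "(t - 1) * (2 * (s choose 2)) = 2 * (t - 1) * (s choose 2)"
    by simp
  moreover have "1 \<le> t - 1"
    using assms(1) by simp
  then have "k * s + k \<le> (t - 1) * (k * s + k)"
    using mult_le_mono1[of 1 "t - 1" "k * s + k"] by (simp only: mult_1)
  ultimately show ?thesis
    by linarith
qed

lemma choose_diff_bound:
  assumes "3 \<le> l" "l \<le> t" "k + l \<le> s"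
  shows "4 * (k * k) + 2 * k + (l - 1) * k + 2 * (t - 1) * ((s - k) choose l)
    \<le> 2 * (t - 1) * (s choose l)"
proof -
  obtain j where l: "l = j + 3"
    using assms(1) by (metis add.commute le_Suc_ex)
  have "k * k + k + ((s - k) choose l) \<le> s choose l"
    by (rule choose_diff_ge[OF assms(1,3)])
  then have "2 * (t - 1) * (k * k + k + ((s - k) choose l)) \<le> 2 * (t - 1) * (s choose l)"
    by (rule mult_le_mono2)
  moreover have "4 * (k * k) + 2 * k + (l - 1) * k \<le> 2 * (j + 2) * (k * k + k)"
    using l by (simp add: algebra_simps)
  moreover have "2 * (j + 2) * (k * k + k) \<le> 2 * (t - 1) * (k * k + k)"
    using assms(2) l by (intro mult_le_mono) auto
  moreover have "2 * (t - 1) * (k * k + k + ((s - k) choose l))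
      = 2 * (t - 1) * (k * k + k) + 2 * (t - 1) * ((s - k) choose l)"
    by (rule add_mult_distrib2)
  ultimately show ?thesis
    by linarith
qed

lemma kst_quadratic_bound:
  fixes D c f s t :: nat
  assumes H: "D * D \<le> (t - 1) * c ^ 3 + c * D" and c: "c \<le> 2 * f + 1"
    and f: "1 \<le> f" "f \<le> s" and s: "27 * (t - 1) + 4 \<le> s"
  shows "D \<le> f * s"
proof (rule ccontr)
  assume "\<not> D \<le> f * s"
  then have D: "f * s < D"
    by simp
  have c3: "c \<le> 3 * f"
    using c f(1) by simp
  have "3 * f \<le> f * s"
    using s by simp
  then have "c \<le> D"
    using c3 D by linarith
  have "D * (D - c) = D * D - c * D"
    by (simp add: diff_mult_distrib2 mult.commute)
  also have "\<dots> \<le> (t - 1) * c ^ 3"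
    using H by simp
  also have "\<dots> \<le> (t - 1) * (3 * f) ^ 3"
    using c3 by (intro mult_le_mono power_mono) auto
  finally have upper: "D * (D - c) \<le> 27 * (t - 1) * (f * f * f)"
    by (simp add: power3_eq_cube algebra_simps)
  have "f * s - 3 * f \<le> D - c"
    using D c3 by simp
  then have "(f * s) * (f * s - 3 * f) \<le> D * (D - c)"
    using D by (intro mult_le_mono) auto
  moreover have "(f * s) * (f * s - 3 * f) = (f * f) * (s * (s - 3))"
    by (simp add: diff_mult_distrib2 algebra_simps)
  ultimately have "(f * f) * (s * (s - 3)) \<le> (f * f) * (27 * (t - 1) * f)"
    using upper by (simp add: algebra_simps)
  then have "s * (s - 3) \<le> 27 * (t - 1) * f"
    using f(1) by simp
  also have "\<dots> \<le> 27 * (t - 1) * s"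
    using f(2) by simp
  finally have "s * (s - 3) \<le> s * (27 * (t - 1))"
    by (simp add: algebra_simps)
  then have "s - 3 \<le> 27 * (t - 1)"
    using s by simp
  then show False
    using s by simp
qed

section \<open>The edge bound\<close>

lemma card_common_neighbours_le:
  assumes g: "is_graph n E" and no_Klt: "\<not> contains_Klt n E l t"
    and T: "T \<subseteq> {0..<n}" "card T = l" and W: "W \<subseteq> {0..<n}"
  shows "card {w\<in>W. T \<subseteq> neighbours_in E S w} \<le> t - 1"
proof (rule ccontr)
  assume "\<not> ?thesis"
  then have "t \<le> card {w\<in>W. T \<subseteq> neighbours_in E S w}"
    by linarith
  then obtain B where B: "B \<subseteq> {w\<in>W. T \<subseteq> neighbours_in E S w}" "card B = t"
    by (rule obtain_subset_with_card_n)
  have "T \<inter> B = {}"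
  proof (rule ccontr)
    assume "T \<inter> B \<noteq> {}"
    then obtain w where "w \<in> T" "w \<in> B"
      by blast
    then have "{w, w} \<in> E"
      using B(1) unfolding neighbours_in_def by blast
    then show False
      using is_graph_loop_free[OF g] by simp
  qed
  moreover have "\<forall>a\<in>T. \<forall>b\<in>B. {a, b} \<in> E"
    using B(1) unfolding neighbours_in_def by blast
  moreover have "B \<subseteq> {0..<n}"
    using B(1) W by blast
  ultimately have "contains_Klt n E l t"
    unfolding contains_Klt_def using T B(2) by blast
  then show False
    using no_Klt by contradiction
qed

text \<open>Double counting pairs \<open>(w, T)\<close> with \<open>T\<close> an \<open>l\<close>-subset of the neighbourhood of \<open>w\<close>.\<close>

lemma sum_choose_card_neighbours_le:
  assumes g: "is_graph n E" and no_Klt: "\<not> contains_Klt n E l t"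
    and S: "S \<subseteq> {0..<n}" and W: "W \<subseteq> {0..<n}"
  shows "(\<Sum>w\<in>W. card (neighbours_in E S w) choose l) \<le> (t - 1) * (card S choose l)"
proof -
  define Sub where "Sub = {T. T \<subseteq> S \<and> card T = l}"
  have fin_S: "finite S" and fin_W: "finite W"
    using S W finite_subset by auto
  have "Sub \<subseteq> Pow S"
    unfolding Sub_def by auto
  then have fin_Sub: "finite Sub"
    by (rule finite_subset) (simp add: fin_S)
  have "card (neighbours_in E S w) choose l = card {T\<in>Sub. T \<subseteq> neighbours_in E S w}" for w
  proof -
    have "finite (neighbours_in E S w)"
      using fin_S unfolding neighbours_in_def by simp
    then have "card (neighbours_in E S w) choose l = card {T. T \<subseteq> neighbours_in E S w \<and> card T = l}"
      by (simp add: n_subsets)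
    also have "{T. T \<subseteq> neighbours_in E S w \<and> card T = l} = {T\<in>Sub. T \<subseteq> neighbours_in E S w}"
      unfolding Sub_def neighbours_in_def by auto
    finally show ?thesis .
  qed
  then have "(\<Sum>w\<in>W. card (neighbours_in E S w) choose l)
      = (\<Sum>w\<in>W. \<Sum>T\<in>Sub. if T \<subseteq> neighbours_in E S w then 1 else 0)"
    using fin_Sub by (simp add: sum.If_cases Int_def)
  also have "\<dots> = (\<Sum>T\<in>Sub. \<Sum>w\<in>W. if T \<subseteq> neighbours_in E S w then 1 else 0)"
    by (rule sum.swap)
  also have "\<dots> = (\<Sum>T\<in>Sub. card {w\<in>W. T \<subseteq> neighbours_in E S w})"
    using fin_W by (simp add: sum.If_cases Int_def)
  also have "\<dots> \<le> (\<Sum>T\<in>Sub. t - 1)"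
    using card_common_neighbours_le[OF g no_Klt _ _ W] S unfolding Sub_def
    by (intro sum_mono) auto
  also have "\<dots> = (t - 1) * (card S choose l)"
    using n_subsets[OF fin_S] unfolding Sub_def by simp
  finally show ?thesis .
qed

lemma sum_degrees_into_le:
  assumes g: "is_graph n E" and no_Klt: "\<not> contains_Klt n E l t" and "1 \<le> l"
    and X: "X \<subseteq> {0..<n}"
  shows "(\<Sum>w\<in>X. card (neighbours_in E X w)) + 2 * (\<Sum>w\<in>{0..<n} - X. card (neighbours_in E X w))
    \<le> (l - 1) * card X + 2 * ((l - 1) * (n - card X)) + 2 * ((t - 1) * (card X choose l))"
proof -
  define d where "d w = card (neighbours_in E X w)" for w
  have sum_le: "(\<Sum>w\<in>A. d w) \<le> (l - 1) * card A + (\<Sum>w\<in>A. d w choose l)" for A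
  proof -
    have "(\<Sum>w\<in>A. d w) \<le> (\<Sum>w\<in>A. (l - 1) + (d w choose l))"
      using le_pred_add_choose[OF \<open>1 \<le> l\<close>] by (rule sum_mono)
    then show ?thesis
      by (simp add: sum.distrib mult.commute)
  qed
  have "(\<Sum>w\<in>{0..<n} - X. d w choose l) + (\<Sum>w\<in>X. d w choose l) = (\<Sum>w\<in>{0..<n}. d w choose l)"
    by (rule sum.subset_diff[OF X, symmetric]) simp
  also have "\<dots> \<le> (t - 1) * (card X choose l)"
    unfolding d_def by (rule sum_choose_card_neighbours_le[OF g no_Klt X]) simp
  finally have "(\<Sum>w\<in>{0..<n} - X. d w choose l) + (\<Sum>w\<in>X. d w choose l)
      \<le> (t - 1) * (card X choose l)" .
  moreover have "card ({0..<n} - X) = n - card X"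
    using X by (simp add: card_Diff_subset finite_subset)
  then have "(\<Sum>w\<in>{0..<n} - X. d w) \<le> (l - 1) * (n - card X) + (\<Sum>w\<in>{0..<n} - X. d w choose l)"
    using sum_le[of "{0..<n} - X"] by simp
  ultimately show ?thesis
    using sum_le[of X] unfolding d_def by linarith
qed

lemma sum_degrees_component_le:
  assumes g: "is_graph n E" and "finite C"
  shows "(\<Sum>w\<in>C. card (neighbours_in E C w)) \<le> card C * (card C - 1)"
proof -
  have "(\<Sum>w\<in>C. card (neighbours_in E C w)) \<le> (\<Sum>w\<in>C. card C - 1)"
    using card_neighbours_in_le[OF g assms(2)] by (rule sum_mono)
  then show ?thesis
    by simp
qed

text \<open>The case \<open>l = 2\<close> of the Kovari--Sos--Turan argument: by Cauchy--Schwarz and double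
  counting of cherries, \<open>D\<^sup>2 \<le> c \<Sum> d\<^sup>2 = c (2 \<Sum> (d choose 2) + D) \<le> (t - 1) c\<^sup>3 + c D\<close>
  for the degree sum \<open>D\<close> of a \<open>K\<^sub>2\<^sub>,\<^sub>t\<close>-free graph on \<open>c\<close> vertices.\<close>

lemma sum_degrees_squared_le_K2t_free:
  assumes g: "is_graph n E" and no_K2t: "\<not> contains_Klt n E 2 t" and C: "C \<subseteq> {0..<n}"
  shows "(\<Sum>w\<in>C. card (neighbours_in E C w))\<^sup>2
    \<le> (t - 1) * card C ^ 3 + card C * (\<Sum>w\<in>C. card (neighbours_in E C w))"
proof -
  define d where "d w = card (neighbours_in E C w)" for w
  define c where "c = card C"
  have "(d w)\<^sup>2 = 2 * (d w choose 2) + d w" for w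
    using twice_choose_two[of "d w"] by (cases "d w") (auto simp: power2_eq_square algebra_simps)
  then have "(\<Sum>w\<in>C. (d w)\<^sup>2) = 2 * (\<Sum>w\<in>C. d w choose 2) + (\<Sum>w\<in>C. d w)"
    by (simp add: sum.distrib sum_distrib_left)
  also have "\<dots> \<le> 2 * ((t - 1) * (c choose 2)) + (\<Sum>w\<in>C. d w)"
    using sum_choose_card_neighbours_le[OF g no_K2t C C] unfolding d_def c_def by simp
  also have "2 * ((t - 1) * (c choose 2)) = (t - 1) * (c * (c - 1))"
    using twice_choose_two[of c] by (metis mult.left_commute)
  finally have squares: "(\<Sum>w\<in>C. (d w)\<^sup>2) \<le> (t - 1) * (c * (c - 1)) + (\<Sum>w\<in>C. d w)" .
  have "(\<Sum>w\<in>C. d w)\<^sup>2 \<le> c * (\<Sum>w\<in>C. (d w)\<^sup>2)"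
    unfolding c_def by (rule sum_squared_le_card_mult_sum_squares_nat)
  also have "\<dots> \<le> c * ((t - 1) * (c * (c - 1)) + (\<Sum>w\<in>C. d w))"
    using squares by simp
  also have "\<dots> \<le> (t - 1) * c ^ 3 + c * (\<Sum>w\<in>C. d w)"
  proof -
    have "c * ((t - 1) * (c * (c - 1))) \<le> (t - 1) * c ^ 3"
      by (simp add: power3_eq_cube algebra_simps mult_le_mono)
    then show ?thesis
      by (simp add: algebra_simps)
  qed
  finally show ?thesis
    unfolding d_def c_def .
qed

lemma sum_degrees_component_le_K2t_free:
  assumes g: "is_graph n E" and no_K2t: "\<not> contains_Klt n E 2 t" and C: "C \<subseteq> {0..<n}"
    and half: "card C div 2 \<le> s" and s: "27 * (t - 1) + 4 \<le> s"
  shows "(\<Sum>w\<in>C. card (neighbours_in E C w)) \<le> card C div 2 * s"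
proof (cases "card C div 2 = 0")
  case True
  then have "card C * (card C - 1) = 0"
    by (cases "card C") auto
  then show ?thesis
    using sum_degrees_component_le[OF g finite_subset[OF C finite_atLeastLessThan]] by linarith
next
  case False
  show ?thesis
  proof (rule kst_quadratic_bound)
    show "(\<Sum>w\<in>C. card (neighbours_in E C w)) * (\<Sum>w\<in>C. card (neighbours_in E C w))
      \<le> (t - 1) * card C ^ 3 + card C * (\<Sum>w\<in>C. card (neighbours_in E C w))"
      using sum_degrees_squared_le_K2t_free[OF g no_K2t C] by (simp add: power2_eq_square)
  qed (use False half s in auto)
qed

lemma half_component_le:
  assumes "finite Y" "(\<Sum>C\<in>components_on E Y. card C div 2) \<le> k" "C \<in> components_on E Y"
  shows "card C div 2 \<le> k"
  using member_le_sum[OF assms(3), of "\<lambda>C. card C div 2"] finite_components_on[OF assms(1)] assms(2)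
  by simp

lemma sum_component_degrees_le_quadratic:
  assumes g: "is_graph n E" and Y: "Y \<subseteq> {0..<n}"
    and half: "(\<Sum>C\<in>components_on E Y. card C div 2) \<le> k"
  shows "(\<Sum>C\<in>components_on E Y. \<Sum>w\<in>C. card (neighbours_in E C w)) \<le> 4 * (k * k) + 2 * k"
proof -
  define f where "f C = card C div 2" for C :: "nat set"
  have fin_Y: "finite Y"
    using Y finite_subset by blast
  have "(\<Sum>C\<in>components_on E Y. \<Sum>w\<in>C. card (neighbours_in E C w))
      \<le> (\<Sum>C\<in>components_on E Y. 4 * (f C * k) + 2 * f C)"
  proof (rule sum_mono)
    fix C
    assume C: "C \<in> components_on E Y"
    have "finite C"
      using components_on_subset[OF C] fin_Y by (rule finite_subset)
    then have "(\<Sum>w\<in>C. card (neighbours_in E C w)) \<le> card C * (card C - 1)"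
      by (rule sum_degrees_component_le[OF g])
    also have "\<dots> \<le> (2 * f C + 1) * (2 * f C)"
      unfolding f_def by (intro mult_le_mono) auto
    also have "\<dots> \<le> 4 * (f C * k) + 2 * f C"
      using half_component_le[OF fin_Y half C] unfolding f_def by (simp add: algebra_simps)
    finally show "(\<Sum>w\<in>C. card (neighbours_in E C w)) \<le> 4 * (f C * k) + 2 * f C" .
  qed
  also have "\<dots> = 4 * ((\<Sum>C\<in>components_on E Y. f C) * k) + 2 * (\<Sum>C\<in>components_on E Y. f C)"
    by (simp add: sum.distrib sum_distrib_left sum_distrib_right)
  also have "\<dots> \<le> 4 * (k * k) + 2 * k"
    using half unfolding f_def by (intro add_mono mult_le_mono) auto
  finally show ?thesis .
qed

lemma sum_component_degrees_le_K2t_free: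
  assumes g: "is_graph n E" and no_K2t: "\<not> contains_Klt n E 2 t" and Y: "Y \<subseteq> {0..<n}"
    and half: "(\<Sum>C\<in>components_on E Y. card C div 2) \<le> k"
    and "k \<le> s" and s: "27 * (t - 1) + 4 \<le> s"
  shows "(\<Sum>C\<in>components_on E Y. \<Sum>w\<in>C. card (neighbours_in E C w)) \<le> k * s"
proof -
  have fin_Y: "finite Y"
    using Y finite_subset by blast
  have "(\<Sum>C\<in>components_on E Y. \<Sum>w\<in>C. card (neighbours_in E C w))
      \<le> (\<Sum>C\<in>components_on E Y. card C div 2 * s)"
  proof (rule sum_mono)
    fix C
    assume C: "C \<in> components_on E Y"
    have "card C div 2 \<le> s"
      using half_component_le[OF fin_Y half C] \<open>k \<le> s\<close> by simp
    then show "(\<Sum>w\<in>C. card (neighbours_in E C w)) \<le> card C div 2 * s"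
      using sum_degrees_component_le_K2t_free[OF g no_K2t _ _ s] components_on_subset[OF C] Y
      by blast
  qed
  also have "\<dots> \<le> k * s"
    using half by (simp flip: sum_distrib_right)
  finally show ?thesis .
qed

lemma sum_component_degrees_bound:
  assumes g: "is_graph n E" and no_Klt: "\<not> contains_Klt n E l t" and l: "2 \<le> l" "l \<le> t"
    and Y: "Y \<subseteq> {0..<n}" and half: "(\<Sum>C\<in>components_on E Y. card C div 2) \<le> k"
    and k: "k + l \<le> s" and s: "27 * (t - 1) + 4 \<le> s"
  shows "(\<Sum>C\<in>components_on E Y. \<Sum>w\<in>C. card (neighbours_in E C w)) + (l - 1) * k
    + 2 * (t - 1) * ((s - k) choose l) \<le> 2 * (t - 1) * (s choose l)"
proof (cases "l = 2")
  case True
  then show ?thesis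
    using sum_component_degrees_le_K2t_free[OF g _ Y half _ s] choose_two_diff_bound[of t k s]
      no_Klt l k by simp
next
  case False
  then show ?thesis
    using sum_component_degrees_le_quadratic[OF g Y half] choose_diff_bound[of l t k s] l k
    by simp
qed

theorem card_edges_le_of_admissible:
  assumes g: "is_graph n E" and no_Klt: "\<not> contains_Klt n E l t" and l: "2 \<le> l" "l \<le> t"
    and X: "admissible n E s X" "l \<le> card X" and s: "27 * (t - 1) + 4 \<le> s"
  shows "2 * card E + (l - 1) * s \<le> 2 * (l - 1) * n + 2 * (t - 1) * (s choose l)"
proof -
  define x where "x = card X"
  define k where "k = s - x"
  have X_sub: "X \<subseteq> {0..<n}"
    and half: "x + (\<Sum>C\<in>components_on E ({0..<n} - X). card C div 2) \<le> s"
    using X(1) unfolding admissible_def components_eq_components_on x_def by auto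
  have "x \<le> n"
    using card_mono[OF _ X_sub] unfolding x_def by simp
  have "s - k = x" "k + l \<le> s"
    using half X(2) unfolding k_def x_def by auto
  have "(\<Sum>C\<in>components_on E ({0..<n} - X). \<Sum>w\<in>C. card (neighbours_in E C w)) + (l - 1) * k
      + 2 * (t - 1) * (x choose l) \<le> 2 * (t - 1) * (s choose l)"
    using sum_component_degrees_bound[OF g no_Klt l _ _ \<open>k + l \<le> s\<close> s, of "{0..<n} - X"]
      half \<open>s - k = x\<close> unfolding k_def by auto
  moreover have "(l - 1) * n = (l - 1) * x + (l - 1) * (n - x)"
    using \<open>x \<le> n\<close> by (simp flip: add_mult_distrib2)
  moreover have "(l - 1) * s = (l - 1) * k + (l - 1) * x"
    using half unfolding k_def by (simp flip: add_mult_distrib2)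
  ultimately have "2 * card E + (l - 1) * s \<le> 2 * ((l - 1) * n) + 2 * ((t - 1) * (s choose l))"
    using twice_card_edges_split[OF g X_sub] sum_degrees_into_le[OF g no_Klt _ X_sub] l(1)
    unfolding x_def by linarith
  then show ?thesis
    by (simp add: mult.assoc)
qed

lemma card_Gfam_le:
  assumes l: "2 \<le> l" "l \<le> t" "l \<le> x" and s: "27 * (t - 1) + 4 \<le> s"
    and E: "E \<in> Gfam n l t s x"
  shows "2 * card E + (l - 1) * s \<le> 2 * (l - 1) * n + 2 * (t - 1) * (s choose l)"
proof -
  have g: "is_graph n E" and no_Klt: "\<not> contains_Klt n E l t"
    and no_match: "\<not> contains_matching E (s + 1)" and "xG n E s = x"
    using E unfolding Gfam_def by auto
  then obtain X where "admissible n E s X" "card X = x"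
    using xG_attained[OF g no_match] by auto
  then show ?thesis
    using card_edges_le_of_admissible[OF g no_Klt l(1,2)] l(3) s by simp
qed

text \<open>For the empty family, \<open>ex_x\<close> is \<open>Sup {} = 0\<close>.\<close>

lemma ex_x_attained:
  "ex_x n l t s x = 0 \<or> (\<exists>E\<in>Gfam n l t s x. ex_x n l t s x = card E)"
proof (cases "Gfam n l t s x = {}")
  case False
  have "Gfam n l t s x \<subseteq> Pow (Pow {0..<n})"
    unfolding Gfam_def is_graph_def by auto
  then have "finite (Gfam n l t s x)"
    by (rule finite_subset) simp
  then have "ex_x n l t s x \<in> card ` Gfam n l t s x"
    unfolding ex_x_def using False by (simp add: cSup_eq_Max)
  then show ?thesis
    by blast
qed (simp add: ex_x_def)

lemma twice_ex_x_le:
  assumes l: "2 \<le> l" "l \<le> t" "l \<le> x" and s: "27 * (t - 1) + 4 \<le> s" and n: "2 * s + 1 \<le> n"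
  shows "2 * ex_x n l t s x + (l - 1) * s \<le> 2 * (l - 1) * n + 2 * (t - 1) * (s choose l)"
proof (cases "ex_x n l t s x = 0")
  case True
  have "(l - 1) * s \<le> 2 * (l - 1) * n"
    using n by simp
  then show ?thesis
    using True by linarith
next
  case False
  then show ?thesis
    using ex_x_attained[of n l t s x] card_Gfam_le[OF l s] by auto
qed

theorem corollary3p5:
  fixes l t :: nat
  assumes "2 \<le> l" and "l \<le> t"
  shows "\<exists>s0. \<forall>s\<ge>s0. \<forall>n x. n \<ge> 2 * s + 1 \<longrightarrow> l \<le> x \<longrightarrow> x \<le> s \<longrightarrow>
           int (ex_x n l t s x) \<le> int ((l - 1) * n) + int ((t - 1) * (s choose l))
              - \<lceil>real (s * (l - 1)) / 2\<rceil>"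
proof (intro exI[of _ "27 * (t - 1) + 4"] allI impI)
  fix s n x
  assume "27 * (t - 1) + 4 \<le> s" "2 * s + 1 \<le> n" "l \<le> x" "x \<le> s"
  then have "real (2 * ex_x n l t s x + (l - 1) * s)
      \<le> real (2 * (l - 1) * n + 2 * (t - 1) * (s choose l))"
    using twice_ex_x_le[OF assms] by (simp only: of_nat_le_iff)
  then have "real (s * (l - 1)) / 2
      \<le> real_of_int (int ((l - 1) * n) + int ((t - 1) * (s choose l)) - int (ex_x n l t s x))"
    by (simp add: algebra_simps)
  then have "\<lceil>real (s * (l - 1)) / 2\<rceil>
      \<le> int ((l - 1) * n) + int ((t - 1) * (s choose l)) - int (ex_x n l t s x)"
    by (simp only: ceiling_le_iff)
  then show "int (ex_x n l t s x) \<le> int ((l - 1) * n) + int ((t - 1) * (s choose l))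
      - \<lceil>real (s * (l - 1)) / 2\<rceil>"
    by linarith
qed

end
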